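(* Let $(u_n)_{n\in\mathbb Z}$ and $(v_n)_{n\in\mathbb Z}$ be complex sequences that vanish faster than any negative power of $|n|$ as $n\to\pm\infty$ and satisfy $1-u_nv_n\neq0$ for all $n$. For the system $$\begin{bmatrix}\xi_n\\ \eta_n\end{bmatrix}=\begin{bmatrix} z & z\,u_n\\ z^{-1}v_n & z^{-1}\end{bmatrix}\begin{bmatrix}\xi_{n+1}\\ \eta_{n+1}\end{bmatrix},\qquad n\in\mathbb Z,$$ with $D_\infty:=\prod_{j=-\infty}^{\infty}(1-u_jv_j)$, the (extended) transmission coefficients satisfy $$T_{\rm l}=1-z^2\sum_{k=-\infty}^{\infty}u_{k+1}v_k+O(z^4),\qquad T_{\rm r}=D_\infty\Big[1-z^2\sum_{k=-\infty}^{\infty}u_{k+1}v_k+O(z^4)\Big],\qquad z\to0,$$ $$\bar T_{\rm l}=1-\frac1{z^2}\sum_{k=-\infty}^{\infty}u_{k}v_{k+1}+O(z^{-4}),\qquad \bar T_{\rm r}=D_\infty\Big[1-\frac1{z^2}\sum_{k=-\infty}^{\infty}u_{k}v_{k+1}+O(z^{-4})\Big],\qquad z\to\infty.$$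
   Context: For $z$ on the unit circle, the Jost solutions $\psi_n,\bar\psi_n,\phi_n,\bar\phi_n$ (overbars are not complex conjugation) are the solutions with $\psi_n=\begin{bmatrix}o(1)\\ z^n[1+o(1)]\end{bmatrix}$ as $n\to+\infty$; $\phi_n=\begin{bmatrix}z^{-n}[1+o(1)]\\ o(1)\end{bmatrix}$ as $n\to-\infty$; $\bar\psi_n=\begin{bmatrix}z^{-n}[1+o(1)]\\ o(1)\end{bmatrix}$ as $n\to+\infty$; $\bar\phi_n=\begin{bmatrix}o(1)\\ z^{n}[1+o(1)]\end{bmatrix}$ as $n\to-\infty$. The transmission coefficients are defined by: the second component of $\psi_n$ is $(1/T_{\rm l})z^n[1+o(1)]$ as $n\to-\infty$; the first component of $\phi_n$ is $(1/T_{\rm r})z^{-n}[1+o(1)]$ as $n\to+\infty$; the first component of $\bar\psi_n$ is $(1/\bar T_{\rm l})z^{-n}[1+o(1)]$ as $n\to-\infty$; the second component of $\bar\phi_n$ is $(1/\bar T_{\rm r})z^{n}[1+o(1)]$ as $n\to+\infty$. The functions $1/T_{\rm l},1/T_{\rm r}$ extend analytically from $|z|=1$ to $|z|<1$ and $1/\bar T_{\rm l},1/\bar T_{\rm r}$ to $|z|>1$; the asymptotics refer to these extensions. *)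

theory Defs
  imports "HOL-Complex_Analysis.Complex_Analysis" "HOL-Library.Landau_Symbols"
begin

definition rapidly_decaying :: "(int \<Rightarrow> complex) \<Rightarrow> bool" where
  "rapidly_decaying u \<longleftrightarrow>
     (\<forall>m::nat. ((\<lambda>n. real_of_int \<bar>n\<bar> ^ m * cmod (u n)) \<longlongrightarrow> 0) at_top \<and>
               ((\<lambda>n. real_of_int \<bar>n\<bar> ^ m * cmod (u n)) \<longlongrightarrow> 0) at_bot)"

definition solves_sys :: "(int \<Rightarrow> complex) \<Rightarrow> (int \<Rightarrow> complex) \<Rightarrow> complex
     \<Rightarrow> (int \<Rightarrow> complex) \<Rightarrow> (int \<Rightarrow> complex) \<Rightarrow> bool" where
  "solves_sys u v z xi eta \<longleftrightarrow>
     (\<forall>n. xi n = z * xi (n+1) + z * u n * eta (n+1) \<and>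
          eta n = v n * xi (n+1) / z + eta (n+1) / z)"

definition jost_psi where
  "jost_psi u v z xi eta \<longleftrightarrow> solves_sys u v z xi eta \<and>
     (xi \<longlongrightarrow> 0) at_top \<and> ((\<lambda>n. eta n / z powi n) \<longlongrightarrow> 1) at_top"

definition jost_phi where
  "jost_phi u v z xi eta \<longleftrightarrow> solves_sys u v z xi eta \<and>
     ((\<lambda>n. xi n / z powi (-n)) \<longlongrightarrow> 1) at_bot \<and> (eta \<longlongrightarrow> 0) at_bot"

definition jost_psibar where
  "jost_psibar u v z xi eta \<longleftrightarrow> solves_sys u v z xi eta \<and>
     ((\<lambda>n. xi n / z powi (-n)) \<longlongrightarrow> 1) at_top \<and> (eta \<longlongrightarrow> 0) at_top"

definition jost_phibar where
  "jost_phibar u v z xi eta \<longleftrightarrow> solves_sys u v z xi eta \<and>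
     (xi \<longlongrightarrow> 0) at_bot \<and> ((\<lambda>n. eta n / z powi n) \<longlongrightarrow> 1) at_bot"

text \<open>Values of 1/T on the unit circle: the Jost solution exists, and every Jost
  solution has the stated asymptotics with constant c.\<close>
definition invTl_at where
  "invTl_at u v z c \<longleftrightarrow> (\<exists>xi eta. jost_psi u v z xi eta) \<and>
     (\<forall>xi eta. jost_psi u v z xi eta \<longrightarrow> ((\<lambda>n. eta n / z powi n) \<longlongrightarrow> c) at_bot)"

definition invTr_at where
  "invTr_at u v z c \<longleftrightarrow> (\<exists>xi eta. jost_phi u v z xi eta) \<and>
     (\<forall>xi eta. jost_phi u v z xi eta \<longrightarrow> ((\<lambda>n. xi n / z powi (-n)) \<longlongrightarrow> c) at_top)"

definition invTlbar_at where
  "invTlbar_at u v z c \<longleftrightarrow> (\<exists>xi eta. jost_psibar u v z xi eta) \<and>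
     (\<forall>xi eta. jost_psibar u v z xi eta \<longrightarrow> ((\<lambda>n. xi n / z powi (-n)) \<longlongrightarrow> c) at_bot)"

definition invTrbar_at where
  "invTrbar_at u v z c \<longleftrightarrow> (\<exists>xi eta. jost_phibar u v z xi eta) \<and>
     (\<forall>xi eta. jost_phibar u v z xi eta \<longrightarrow> ((\<lambda>n. eta n / z powi n) \<longlongrightarrow> c) at_top)"

definition ext_inside :: "(complex \<Rightarrow> complex \<Rightarrow> bool) \<Rightarrow> (complex \<Rightarrow> complex) \<Rightarrow> bool" where
  "ext_inside P F \<longleftrightarrow> F holomorphic_on ball 0 1 \<and> continuous_on (cball 0 1) F \<and>
     (\<forall>z. cmod z = 1 \<longrightarrow> P z (F z))"

definition ext_outside :: "(complex \<Rightarrow> complex \<Rightarrow> bool) \<Rightarrow> (complex \<Rightarrow> complex) \<Rightarrow> bool" where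
  "ext_outside P F \<longleftrightarrow> F holomorphic_on {z. 1 < cmod z} \<and> continuous_on {z. 1 \<le> cmod z} F \<and>
     (\<forall>z. cmod z = 1 \<longrightarrow> P z (F z))"

definition Dinf :: "(int \<Rightarrow> complex) \<Rightarrow> (int \<Rightarrow> complex) \<Rightarrow> complex" where
  "Dinf u v = lim (\<lambda>N::nat. \<Prod>j\<in>{-int N..int N}. 1 - u j * v j)"

end

theory Submission
  imports Defs
begin

text \<open>
  Write a solution as \<psi>_n = z^n (a_n, b_n). The system becomes
  (a_n, b_n) = (z^2 (a_(n+1) + u_n b_(n+1)), v_n a_(n+1) + b_(n+1)), a recursion in z^2 whose
  steps are Lipschitz with constant 1 + |u_n| + |v_n| for |z| \<le> 1. Hence the solutions started
  from (0, 1) at n = N converge as N \<rightarrow> \<infinity>, uniformly on the closed unit disk, and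
  1/T_l = lim b_n (n \<rightarrow> -\<infinity>) is holomorphic inside the disk and continuous up to the circle.
  Iterating the recursion twice gives b_n = 1 + z^2 \<Sum>_(k \<ge> n) v_k u_(k+1) + O(z^4) uniformly
  in n, which is the expansion of 1/T_l.

  The other coefficients reduce to T_l. Replacing z by 1/z and exchanging u and v turns the
  barred Jost solutions into the unbarred ones. The reflection n \<mapsto> -n - 1,
  u_n \<mapsto> -u_(-n-1), v_n \<mapsto> -v_(-n-1), combined with the factor \<Prod>_(j < n) (1 - u_j v_j), turns
  \<phi> into the barred \<psi> of the reflected system; as n \<rightarrow> \<infinity> this factor tends to D_\<infinity>, which
  is how D_\<infinity> enters T_r and its barred counterpart.
\<close>

section \<open>Two-sided sequences, uniform limits and Landau symbols\<close>

definition abs_summable_int :: "(int \<Rightarrow> 'a::real_normed_vector) \<Rightarrow> bool" where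
  "abs_summable_int u \<longleftrightarrow> summable (\<lambda>j. norm (u (int j))) \<and> summable (\<lambda>j. norm (u (- int j)))"

lemma tendsto_at_bot_iff_tendsto_uminus_at_top:
  fixes f :: "'a::{ordered_ab_group_add,linorder} \<Rightarrow> 'b::topological_space"
  shows "(f \<longlongrightarrow> L) at_bot \<longleftrightarrow> ((\<lambda>x. f (- x)) \<longlongrightarrow> L) at_top"
  unfolding at_bot_mirror filterlim_filtermap o_def ..

lemma tendsto_at_top_iff_tendsto_uminus_at_bot:
  fixes f :: "'a::{ordered_ab_group_add,linorder} \<Rightarrow> 'b::topological_space"
  shows "(f \<longlongrightarrow> L) at_top \<longleftrightarrow> ((\<lambda>x. f (- x)) \<longlongrightarrow> L) at_bot"
  unfolding at_top_mirror filterlim_filtermap o_def ..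

lemma summable_if_square_mult_tendsto_0:
  fixes f :: "nat \<Rightarrow> real"
  assumes lim: "(\<lambda>j. real j ^ 2 * f j) \<longlonglongrightarrow> 0" and nonneg: "\<And>j. f j \<ge> 0"
  shows "summable f"
proof -
  obtain N where N: "\<And>j. j \<ge> N \<Longrightarrow> real j ^ 2 * f j < 1"
    using order_tendstoD(2)[OF lim, of 1] by (auto simp: eventually_at_top_linorder)
  have "norm (f j) \<le> inverse (real j ^ 2)" if "j \<ge> max N 1" for j
    using N[of j] that nonneg[of j] by (simp add: field_simps)
  then show ?thesis
    by (intro summable_comparison_test'[OF inverse_power_summable[of 2], of "max N 1"]) auto
qed

lemma rapidly_decaying_imp_abs_summable_int:
  assumes "rapidly_decaying u"
  shows "abs_summable_int u"
proof -
  let ?w = "\<lambda>n. real_of_int \<bar>n\<bar> ^ 2 * cmod (u n)"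
  have top: "(?w \<longlongrightarrow> 0) at_top" and bot: "((\<lambda>n. ?w (- n)) \<longlongrightarrow> 0) at_top"
    using assms unfolding rapidly_decaying_def tendsto_at_bot_iff_tendsto_uminus_at_top by blast+
  have "(\<lambda>j. ?w (int j)) \<longlonglongrightarrow> 0" "(\<lambda>j. ?w (- int j)) \<longlonglongrightarrow> 0"
    using filterlim_compose[OF top filterlim_int_sequentially]
      filterlim_compose[OF bot filterlim_int_sequentially] by simp_all
  then show ?thesis
    unfolding abs_summable_int_def by (auto intro!: summable_if_square_mult_tendsto_0)
qed

lemma summable_shift_neg:
  fixes f :: "int \<Rightarrow> real"
  assumes "summable (\<lambda>j. f (- int j))"
  shows "summable (\<lambda>j. f (- int j - 1))"
proof -
  have "- int (Suc j) = - int j - 1" for j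
    by simp
  then show ?thesis
    using assms summable_Suc_iff[of "\<lambda>j. f (- int j)"] by (simp only:)
qed

lemma tendsto_suminf_tail_0:
  fixes g :: "nat \<Rightarrow> 'a::real_normed_vector"
  assumes "summable g"
  shows "(\<lambda>N. \<Sum>j. g (j + N)) \<longlonglongrightarrow> 0"
proof -
  have "(\<lambda>N. suminf g - (\<Sum>j<N. g j)) \<longlonglongrightarrow> suminf g - suminf g"
    by (intro tendsto_diff tendsto_const summable_LIMSEQ assms)
  then show ?thesis
    by (simp add: suminf_minus_initial_segment[OF assms])
qed

lemma uniform_limit_if_summable_steps:
  fixes f :: "nat \<Rightarrow> 'a \<Rightarrow> 'b::complete_space"
  assumes steps: "\<And>N z. z \<in> X \<Longrightarrow> dist (f (Suc N) z) (f N z) \<le> g N" and g: "summable g"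
  shows "uniform_limit X f (\<lambda>z. lim (\<lambda>N. f N z)) sequentially"
    and "\<And>z N. z \<in> X \<Longrightarrow> dist (lim (\<lambda>N. f N z)) (f N z) \<le> (\<Sum>j. g (j + N))"
proof -
  have acc: "dist (f M z) (f N z) \<le> sum g {N..<M}" if "z \<in> X" "N \<le> M" for z N M
    using \<open>N \<le> M\<close>
  proof (induction M rule: dec_induct)
    case (step M)
    have "dist (f (Suc M) z) (f N z) \<le> dist (f (Suc M) z) (f M z) + dist (f M z) (f N z)"
      by (rule dist_triangle)
    also have "\<dots> \<le> g M + sum g {N..<M}"
      using steps[OF \<open>z \<in> X\<close>] step.IH by (intro add_mono)
    finally show ?case
      using step.hyps by simp
  qed simp
  have "uniformly_Cauchy_on X f"
  proof (rule uniformly_Cauchy_onI')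
    fix e :: real assume "e > 0"
    then obtain N where N: "\<And>m n. m \<ge> N \<Longrightarrow> norm (sum g {m..<n}) < e"
      using g unfolding summable_Cauchy by blast
    show "\<exists>M. \<forall>z\<in>X. \<forall>m\<ge>M. \<forall>n>m. dist (f m z) (f n z) < e"
    proof (intro exI ballI allI impI)
      fix z m n assume "z \<in> X" "N \<le> m" "m < n"
      have "dist (f m z) (f n z) \<le> sum g {m..<n}"
        using acc[OF \<open>z \<in> X\<close>, of m n] \<open>m < n\<close> by (simp add: dist_commute)
      also have "\<dots> < e"
        using N[OF \<open>N \<le> m\<close>, of n] by simp
      finally show "dist (f m z) (f n z) < e" .
    qed
  qed
  then show ulim: "uniform_limit X f (\<lambda>z. lim (\<lambda>N. f N z)) sequentially"
    using Cauchy_uniformly_convergent uniformly_convergent_uniform_limit_iff by blast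
  fix z N assume "z \<in> X"
  have "(\<lambda>M. dist (f M z) (f N z)) \<longlonglongrightarrow> dist (lim (\<lambda>N. f N z)) (f N z)"
    by (intro tendsto_intros tendsto_uniform_limitI[OF ulim \<open>z \<in> X\<close>])
  moreover have "(\<lambda>M. sum g {..<M} - sum g {..<N}) \<longlonglongrightarrow> suminf g - sum g {..<N}"
    by (intro tendsto_intros summable_LIMSEQ g)
  moreover have "eventually (\<lambda>M. dist (f M z) (f N z) \<le> sum g {..<M} - sum g {..<N}) sequentially"
    using eventually_ge_at_top[of N]
  proof eventually_elim
    case (elim M)
    then show ?case
      using acc[OF \<open>z \<in> X\<close> elim] by (simp add: lessThan_atLeast0 sum_diff_nat_ivl)
  qed
  ultimately show "dist (lim (\<lambda>N. f N z)) (f N z) \<le> (\<Sum>j. g (j + N))"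
    by (simp add: tendsto_le[OF sequentially_bot] suminf_minus_initial_segment[OF g])
qed

lemma tendsto_at_top_int_if_dist_le:
  fixes f :: "int \<Rightarrow> 'a::metric_space"
  assumes "\<And>n. n \<ge> 0 \<Longrightarrow> dist (f n) L \<le> h (nat n)" and "h \<longlonglongrightarrow> 0"
  shows "(f \<longlongrightarrow> L) at_top"
proof (rule metric_tendsto_imp_tendsto)
  show "((\<lambda>n. h (nat n)) \<longlongrightarrow> 0) at_top"
    by (rule filterlim_compose[OF assms(2) filterlim_nat_sequentially])
  show "eventually (\<lambda>n. dist (f n) L \<le> dist (h (nat n)) 0) at_top"
    using eventually_ge_at_top[of 0]
    by eventually_elim (use assms(1) in \<open>force simp: dist_real_def\<close>)
qed

lemma abs_summable_int_imp_norm_summable_on: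
  assumes "abs_summable_int u"
  shows "(\<lambda>n. norm (u n)) summable_on UNIV"
proof -
  have "(\<lambda>n. norm (u n)) summable_on range int"
    using assms
    by (simp add: abs_summable_int_def summable_on_reindex o_def summable_on_UNIV_nonneg_real_iff)
  moreover have "(\<lambda>n. norm (u n)) summable_on range (\<lambda>j. - int j)"
    using assms by (simp add: abs_summable_int_def summable_on_reindex inj_on_def o_def
        summable_on_UNIV_nonneg_real_iff)
  moreover have "range int \<union> range (\<lambda>j. - int j) = UNIV"
  proof -
    have "n \<in> range int \<or> n \<in> range (\<lambda>j. - int j)" for n :: int
      by (cases "n \<ge> 0") (auto simp: image_iff intro!: exI[of _ "nat \<bar>n\<bar>"])
    then show ?thesis by blast
  qed
  ultimately show ?thesis
    by (metis summable_on_union)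
qed

lemma holomorphic_uniform_limit_sequentially:
  assumes "\<And>N. continuous_on (cball z r) (f N) \<and> f N holomorphic_on ball z r"
    and "uniform_limit (cball z r) f g sequentially"
  shows "continuous_on (cball z r) g \<and> g holomorphic_on ball z r"
proof -
  have "\<forall>\<^sub>F N in sequentially. continuous_on (cball z r) (f N) \<and> f N holomorphic_on ball z r"
    using assms(1) by simp
  from holomorphic_uniform_limit[OF this assms(2) trivial_limit_sequentially] show ?thesis
    by blast
qed

lemma tendsto_sum_symmetric_int_intervals:
  fixes f :: "int \<Rightarrow> 'a::{topological_comm_monoid_add, t2_space}"
  assumes "f summable_on UNIV"
  shows "(\<lambda>N. \<Sum>k\<in>{- int N..<int N - 1}. f k) \<longlonglongrightarrow> (\<Sum>\<^sub>\<infinity>k. f k)"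
proof -
  have "filterlim (\<lambda>N. {- int N..<int N - 1}) (finite_subsets_at_top UNIV) sequentially"
    unfolding filterlim_finite_subsets_at_top
  proof (intro allI impI)
    fix X :: "int set" assume "finite X \<and> X \<subseteq> UNIV"
    define M where "M = Max (insert 0 (abs ` X))"
    have M: "\<bar>x\<bar> \<le> M" if "x \<in> X" for x
      unfolding M_def using \<open>finite X \<and> X \<subseteq> UNIV\<close> that by (intro Max_ge) auto
    show "\<forall>\<^sub>F N in sequentially. finite {- int N..<int N - 1} \<and> X \<subseteq> {- int N..<int N - 1} \<and>
        {- int N..<int N - 1} \<subseteq> UNIV"
      using eventually_ge_at_top[of "nat M + 2"] by eventually_elim (use M in force)
  qed
  then show ?thesis
    using filterlim_compose[OF has_sum_infsum[OF assms, unfolded has_sum_def]] by blast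
qed

definition l1_dist :: "'a::real_normed_vector \<times> 'a \<Rightarrow> 'a \<times> 'a \<Rightarrow> real" where
  "l1_dist p q = norm (fst p - fst q) + norm (snd p - snd q)"

lemma l1_dist_nonneg: "l1_dist p q \<ge> 0"
  by (simp add: l1_dist_def)

lemma dist_fst_le_l1_dist: "dist (fst p) (fst q) \<le> l1_dist p q"
  and dist_snd_le_l1_dist: "dist (snd p) (snd q) \<le> l1_dist p q"
  by (simp_all add: l1_dist_def dist_norm)

lemma tendsto_0_if_bigo_power_at_0:
  fixes R :: "complex \<Rightarrow> complex"
  assumes "n > 0" and "R \<in> O[at 0](\<lambda>z. z ^ n)"
  shows "(R \<longlongrightarrow> 0) (at 0)"
proof -
  have "(\<lambda>z::complex. z ^ n) \<in> o[at 0](\<lambda>_. 1)"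
    using assms(1) by (intro smalloI_tendsto) (auto intro!: tendsto_eq_intros)
  then have "((\<lambda>z. R z / 1) \<longlongrightarrow> 0) (at 0)"
    using landau_o.big_small_trans[OF assms(2)] smalloD_tendsto by blast
  then show ?thesis
    by simp
qed

lemma inverse_expansion_at_0:
  fixes B :: "complex \<Rightarrow> complex"
  assumes "(\<lambda>z. B z - (1 + z^2 * S)) \<in> O[at 0](\<lambda>z. z^4)"
  shows "(\<lambda>z. 1 / B z - (1 - z^2 * S)) \<in> O[at 0](\<lambda>z. z^4)"
proof -
  define R where "R z = B z - (1 + z^2 * S)" for z
  have R: "R \<in> O[at 0](\<lambda>z. z^4)"
    using assms unfolding R_def .
  have "((\<lambda>z. R z + (1 + z^2 * S)) \<longlongrightarrow> 0 + (1 + 0^2 * S)) (at 0)"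
    using tendsto_0_if_bigo_power_at_0[OF _ R] by (auto intro!: tendsto_eq_intros)
  then have B: "(B \<longlongrightarrow> 1) (at 0)"
    by (simp add: R_def)
  then have "eventually (\<lambda>z. B z \<noteq> 0) (at 0)"
    by (rule tendsto_imp_eventually_ne) simp
  moreover have "(\<lambda>z. 1 / B z) \<in> O[at 0](\<lambda>_. 1)"
    using B by (intro bigoI_tendsto[where c = 1]) (auto intro!: tendsto_eq_intros)
  moreover have "(\<lambda>z. z^4 * S^2 - R z * (1 - z^2 * S)) \<in> O[at 0](\<lambda>z. 1 * z^4)"
  proof (rule sum_in_bigo)
    show "(\<lambda>z. z^4 * S^2) \<in> O[at 0](\<lambda>z. 1 * z^4)"
      by (intro bigoI[where c = "cmod (S^2)"] always_eventually) (simp add: norm_mult)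
    have "(\<lambda>z. 1 - z^2 * S) \<in> O[at 0](\<lambda>_. 1)"
      by (intro bigoI_tendsto[where c = 1]) (auto intro!: tendsto_eq_intros)
    from landau_o.big.mult[OF R this] show "(\<lambda>z. R z * (1 - z^2 * S)) \<in> O[at 0](\<lambda>z. 1 * z^4)"
      by (simp add: mult.commute)
  qed
  ultimately have "(\<lambda>z. 1 / B z * (z^4 * S^2 - R z * (1 - z^2 * S))) \<in> O[at 0](\<lambda>z. 1 * (1 * z^4))"
    using landau_o.big.mult by blast
  then have big: "(\<lambda>z. 1 / B z * (z^4 * S^2 - R z * (1 - z^2 * S))) \<in> O[at 0](\<lambda>z. z^4)"
    by (simp only: mult_1_left)
  have "eventually
      (\<lambda>z. 1 / B z * (z^4 * S^2 - R z * (1 - z^2 * S)) = 1 / B z - (1 - z^2 * S)) (at 0)"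
    using \<open>eventually (\<lambda>z. B z \<noteq> 0) (at 0)\<close>
    by eventually_elim (simp add: R_def field_simps power2_eq_square power4_eq_xxxx)
  from landau_o.big.in_cong[OF this] big show ?thesis
    by blast
qed

lemma inverse_expansion_at_infinity:
  fixes B :: "complex \<Rightarrow> complex"
  assumes "(\<lambda>z. B z - (1 + z^2 * S)) \<in> O[at 0](\<lambda>z. z^4)"
  shows "(\<lambda>z. 1 / B (1 / z) - (1 - S / z^2)) \<in> O[at_infinity](\<lambda>z. 1 / z^4)"
proof -
  have "filterlim (\<lambda>z::complex. 1 / z) (at 0) at_infinity"
    using filterlim_inverse_at_iff[of "\<lambda>z. z" at_infinity, THEN iffD2, OF filterlim_ident]
    by (simp add: inverse_eq_divide)
  from landau_o.big.compose[OF inverse_expansion_at_0[OF assms] this]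
  show ?thesis
    by (simp add: power_one_over)
qed

lemma ext_inside_divide:
  assumes "ext_inside P B" and "D \<noteq> 0" and "\<And>z c. cmod z = 1 \<Longrightarrow> P z c \<Longrightarrow> Q z (c / D)"
  shows "ext_inside Q (\<lambda>z. B z / D)"
  using assms unfolding ext_inside_def
  by (auto intro!: holomorphic_on_divide continuous_on_divide continuous_on_const)

lemma ext_outside_compose_inverse:
  assumes "ext_inside P B" and "\<And>z c. cmod z = 1 \<Longrightarrow> P (1 / z) c \<Longrightarrow> Q z c"
  shows "ext_outside Q (\<lambda>z. B (1 / z))"
  unfolding ext_outside_def
proof (intro conjI allI impI)
  have B: "B holomorphic_on ball 0 1" "continuous_on (cball 0 1) B"
    and P: "\<And>z. cmod z = 1 \<Longrightarrow> P z (B z)"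
    using assms(1) unfolding ext_inside_def by blast+
  have "(B \<circ> (\<lambda>z. 1 / z)) holomorphic_on {z. 1 < cmod z}"
    by (rule holomorphic_on_compose_gen[OF _ B(1)])
      (auto intro!: holomorphic_intros simp: norm_divide divide_less_eq)
  then show "(\<lambda>z. B (1 / z)) holomorphic_on {z. 1 < cmod z}"
    by (simp add: o_def)
  show "continuous_on {z. 1 \<le> cmod z} (\<lambda>z. B (1 / z))"
    by (rule continuous_on_compose2[OF B(2)])
      (auto intro!: continuous_on_divide continuous_on_const continuous_on_id
        simp: norm_divide divide_le_eq)
  fix z :: complex assume "cmod z = 1"
  then show "Q z (B (1 / z))"
    using assms(2) P[of "1 / z"] by (simp add: norm_divide)
qed

section \<open>The normalised Jost solution \<open>\<psi>\<close> and \<open>1/T\<^sub>l\<close>\<close>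

locale summable_potentials =
  fixes u v :: "int \<Rightarrow> complex"
  assumes abs_summable_u: "abs_summable_int u" and abs_summable_v: "abs_summable_int v"
begin

definition weight :: "int \<Rightarrow> real" where "weight n = cmod (u n) + cmod (v n)"

definition total_weight :: real where "total_weight = (\<Sum>\<^sub>\<infinity>n. weight n)"

definition growth_bound :: real where "growth_bound = exp total_weight"

lemma weight_nonneg: "weight n \<ge> 0"
  by (simp add: weight_def)

lemma weight_summable_on: "weight summable_on UNIV"
  unfolding weight_def
  by (intro summable_on_add abs_summable_int_imp_norm_summable_on abs_summable_u abs_summable_v)

lemma sum_weight_le_total_weight:
  assumes "finite A"
  shows "sum weight A \<le> total_weight"
  unfolding total_weight_def infsum_finite[OF assms, symmetric]
  by (intro infsum_mono2 summable_on_finite weight_summable_on assms weight_nonneg) auto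

lemma total_weight_nonneg: "total_weight \<ge> 0"
  unfolding total_weight_def by (intro infsum_nonneg weight_nonneg)

lemma norm_u_le_total_weight: "cmod (u n) \<le> total_weight"
  and norm_v_le_total_weight: "cmod (v n) \<le> total_weight"
proof -
  have "cmod (u n) + cmod (v n) \<le> total_weight"
    using sum_weight_le_total_weight[of "{n}"] by (simp add: weight_def)
  then show "cmod (u n) \<le> total_weight" "cmod (v n) \<le> total_weight"
    using norm_ge_zero[of "u n"] norm_ge_zero[of "v n"] by linarith+
qed

lemma prod_weight_le_growth_bound:
  assumes "finite A"
  shows "(\<Prod>k\<in>A. 1 + weight k) \<le> growth_bound"
proof -
  have "(\<Prod>k\<in>A. 1 + weight k) \<le> exp (sum weight A)"
    by (rule prod_le_exp_sum) (simp add: weight_nonneg)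
  also have "\<dots> \<le> growth_bound"
    unfolding growth_bound_def using sum_weight_le_total_weight[OF assms] by simp
  finally show ?thesis .
qed

lemma growth_bound_ge_1: "growth_bound \<ge> 1"
  unfolding growth_bound_def using total_weight_nonneg by simp

text \<open>If \<open>(\<xi>, \<eta>)\<close> solves the system, then \<open>p\<^sub>n = (\<xi>\<^sub>n / z\<^sup>n, \<eta>\<^sub>n / z\<^sup>n)\<close>
  satisfies \<open>p\<^sub>n = step n z p\<^sub>n\<^sub>+\<^sub>1\<close>, a recursion in which only \<open>z\<^sup>2\<close> occurs.\<close>
definition step :: "int \<Rightarrow> complex \<Rightarrow> complex \<times> complex \<Rightarrow> complex \<times> complex" where
  "step n z p = (z^2 * (fst p + u n * snd p), v n * fst p + snd p)"

lemma solves_sys_iff_step: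
  assumes "z \<noteq> 0"
  shows "solves_sys u v z xi eta \<longleftrightarrow>
    (\<forall>n. (xi n / z powi n, eta n / z powi n) =
         step n z (xi (n + 1) / z powi (n + 1), eta (n + 1) / z powi (n + 1)))"
proof -
  have "z^2 * (xi (n + 1) / z powi (n + 1) + u n * (eta (n + 1) / z powi (n + 1))) =
      (z * xi (n + 1) + z * u n * eta (n + 1)) / z powi n"
    "v n * (xi (n + 1) / z powi (n + 1)) + eta (n + 1) / z powi (n + 1) =
      (v n * xi (n + 1) / z + eta (n + 1) / z) / z powi n" for n
    using assms by (simp_all add: power_int_add field_simps power2_eq_square)
  then show ?thesis
    using assms unfolding solves_sys_def step_def by simp
qed

function trunc_sol :: "complex \<Rightarrow> int \<Rightarrow> int \<Rightarrow> complex \<times> complex" where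
  "trunc_sol z N n = (if N \<le> n then (0, 1) else step n z (trunc_sol z N (n + 1)))"
  by auto
termination by (relation "Wellfounded.measure (\<lambda>(z, N, n). nat (N - n))") auto

declare trunc_sol.simps [simp del]

lemma trunc_sol_ge: "N \<le> n \<Longrightarrow> trunc_sol z N n = (0, 1)"
  by (simp add: trunc_sol.simps)

lemma trunc_sol_less: "n < N \<Longrightarrow> trunc_sol z N n = step n z (trunc_sol z N (n + 1))"
  by (simp add: trunc_sol.simps)

lemma trunc_sol_holomorphic:
  "(\<lambda>z. fst (trunc_sol z N n)) holomorphic_on UNIV \<and>
    (\<lambda>z. snd (trunc_sol z N n)) holomorphic_on UNIV"
proof (induction "nat (N - n)" arbitrary: n)
  case 0
  then show ?case by (simp add: trunc_sol_ge)
next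
  case (Suc k)
  then have "n < N" by simp
  moreover have "k = nat (N - (n + 1))"
    using Suc.hyps(2) by simp
  ultimately show ?case
    using Suc.hyps(1) unfolding trunc_sol_less[OF \<open>n < N\<close>] step_def
    by (auto intro!: holomorphic_intros)
qed

lemma step_l1_dist_le:
  assumes "cmod z \<le> 1"
  shows "l1_dist (step n z p) (step n z q) \<le> (1 + weight n) * l1_dist p q"
proof -
  define a b where "a = fst p - fst q" and "b = snd p - snd q"
  have "fst (step n z p) - fst (step n z q) = z^2 * (a + u n * b)"
    and "snd (step n z p) - snd (step n z q) = v n * a + b"
    unfolding step_def a_def b_def by (simp_all add: algebra_simps)
  moreover have "cmod (z^2 * (a + u n * b)) \<le> cmod a + cmod (u n) * cmod b"
  proof -
    have "cmod (z^2 * (a + u n * b)) \<le> cmod (a + u n * b)"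
      using assms by (simp add: norm_mult norm_power power_le_one mult_left_le_one_le)
    also have "\<dots> \<le> cmod a + cmod (u n) * cmod b"
      using norm_triangle_ineq[of a "u n * b"] by (simp add: norm_mult)
    finally show ?thesis .
  qed
  moreover have "cmod (v n * a + b) \<le> cmod (v n) * cmod a + cmod b"
    using norm_triangle_ineq[of "v n * a" b] by (simp add: norm_mult)
  moreover have "cmod a + cmod (u n) * cmod b + (cmod (v n) * cmod a + cmod b)
      = (1 + weight n) * (cmod a + cmod b) - cmod (u n) * cmod a - cmod (v n) * cmod b"
    unfolding weight_def by (simp add: algebra_simps)
  ultimately show ?thesis
    unfolding l1_dist_def a_def[symmetric] b_def[symmetric]
    by (smt (verit) mult_nonneg_nonneg norm_ge_zero)
qed

lemma l1_dist_orbits_le: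
  assumes z: "cmod z \<le> 1" and "m \<le> M"
    and p: "\<And>n. m \<le> n \<Longrightarrow> n < M \<Longrightarrow> p n = step n z (p (n + 1))"
    and q: "\<And>n. m \<le> n \<Longrightarrow> n < M \<Longrightarrow> q n = step n z (q (n + 1))"
  shows "l1_dist (p m) (q m) \<le> growth_bound * l1_dist (p M) (q M)"
proof -
  have bound: "l1_dist (p n) (q n) \<le> (\<Prod>j\<in>{n..<M}. 1 + weight j) * l1_dist (p M) (q M)"
    if "m \<le> n" "n \<le> M" for n
    using that
  proof (induction "nat (M - n)" arbitrary: n)
    case 0
    then show ?case by simp
  next
    case (Suc k)
    then have "n < M" by simp
    have "l1_dist (p n) (q n) \<le> (1 + weight n) * l1_dist (p (n + 1)) (q (n + 1))"
      unfolding p[OF \<open>m \<le> n\<close> \<open>n < M\<close>] q[OF \<open>m \<le> n\<close> \<open>n < M\<close>] by (rule step_l1_dist_le[OF z])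
    also have "\<dots> \<le> (1 + weight n) * ((\<Prod>j\<in>{n + 1..<M}. 1 + weight j) * l1_dist (p M) (q M))"
      using Suc.hyps Suc.prems \<open>n < M\<close> weight_nonneg[of n] by (intro mult_left_mono) auto
    also have "{n..<M} = insert n {n + 1..<M}"
      using \<open>n < M\<close> by auto
    then have "(1 + weight n) * ((\<Prod>j\<in>{n + 1..<M}. 1 + weight j) * l1_dist (p M) (q M)) =
        (\<Prod>j\<in>{n..<M}. 1 + weight j) * l1_dist (p M) (q M)"
      by simp
    finally show ?case .
  qed
  have "l1_dist (p m) (q m) \<le> (\<Prod>j\<in>{m..<M}. 1 + weight j) * l1_dist (p M) (q M)"
    using bound \<open>m \<le> M\<close> by simp
  also have "\<dots> \<le> growth_bound * l1_dist (p M) (q M)"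
    by (intro mult_right_mono prod_weight_le_growth_bound l1_dist_nonneg) simp
  finally show ?thesis .
qed

lemma trunc_sol_norm_le:
  assumes "cmod z \<le> 1"
  shows "cmod (fst (trunc_sol z N n)) + cmod (snd (trunc_sol z N n)) \<le> growth_bound"
proof (cases "N \<le> n")
  case True
  then show ?thesis
    using growth_bound_ge_1 by (simp add: trunc_sol_ge)
next
  case False
  have "l1_dist (trunc_sol z N n) (0, 0) \<le> growth_bound * l1_dist (trunc_sol z N N) (0, 0)"
  proof (rule l1_dist_orbits_le[OF assms, where p = "trunc_sol z N" and q = "\<lambda>_. (0, 0)"])
    show "n \<le> N"
      using False by simp
    show "trunc_sol z N k = step k z (trunc_sol z N (k + 1))" if "k < N" for k
      using that by (rule trunc_sol_less)
    show "(0, 0) = step k z (0, 0)" for k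
      by (simp add: step_def)
  qed
  then show ?thesis
    by (simp add: trunc_sol_ge l1_dist_def)
qed

lemma trunc_sol_Suc_l1_dist_le:
  assumes "cmod z \<le> 1"
  shows "l1_dist (trunc_sol z (N + 1) n) (trunc_sol z N n) \<le> growth_bound * cmod (u N)"
proof (cases "N < n")
  case True
  then show ?thesis
    using growth_bound_ge_1 by (simp add: trunc_sol_ge l1_dist_def)
next
  case False
  have "l1_dist (trunc_sol z (N + 1) n) (trunc_sol z N n)
      \<le> growth_bound * l1_dist (trunc_sol z (N + 1) N) (trunc_sol z N N)"
  proof (rule l1_dist_orbits_le[OF assms, where p = "trunc_sol z (N + 1)" and q = "trunc_sol z N"])
    show "n \<le> N"
      using False by simp
    show "trunc_sol z (N + 1) k = step k z (trunc_sol z (N + 1) (k + 1))"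
      and "trunc_sol z N k = step k z (trunc_sol z N (k + 1))" if "k < N" for k
      using that by (simp_all add: trunc_sol_less)
  qed
  also have "l1_dist (trunc_sol z (N + 1) N) (trunc_sol z N N) = cmod (z^2 * u N)"
    by (simp add: trunc_sol_less trunc_sol_ge l1_dist_def step_def)
  also have "\<dots> \<le> cmod (u N)"
    using assms by (simp add: norm_mult norm_power power_le_one mult_left_le_one_le)
  finally show ?thesis
    using growth_bound_ge_1 by (simp add: mult_left_mono)
qed

text \<open>For \<open>|z| = 1\<close>, \<open>(psi1 n z, psi2 n z)\<close> is \<open>z\<^sup>-\<^sup>n \<psi>\<^sub>n\<close>.\<close>
definition psi1 :: "int \<Rightarrow> complex \<Rightarrow> complex" where
  "psi1 n z = lim (\<lambda>N. fst (trunc_sol z (int N) n))"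

definition psi2 :: "int \<Rightarrow> complex \<Rightarrow> complex" where
  "psi2 n z = lim (\<lambda>N. snd (trunc_sol z (int N) n))"

lemma summable_growth_bound_u: "summable (\<lambda>j. growth_bound * cmod (u (int j)))"
  using abs_summable_u unfolding abs_summable_int_def by (intro summable_mult) simp

lemma psi1_uniform_limit:
  shows "uniform_limit (cball 0 1) (\<lambda>N z. fst (trunc_sol z (int N) n)) (psi1 n) sequentially"
    and "z \<in> cball 0 1 \<Longrightarrow>
      dist (psi1 n z) (fst (trunc_sol z (int N) n)) \<le> (\<Sum>j. growth_bound * cmod (u (int (j + N))))"
proof -
  have steps: "dist (fst (trunc_sol z (int (Suc N)) n)) (fst (trunc_sol z (int N) n))
      \<le> growth_bound * cmod (u (int N))" if "z \<in> cball 0 1" for z N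
    using order_trans[OF dist_fst_le_l1_dist trunc_sol_Suc_l1_dist_le[of z "int N" n]] that
    by (simp only: of_nat_Suc add.commute mem_cball_0)
  note lim = uniform_limit_if_summable_steps[where X = "cball 0 1"
      and f = "\<lambda>N z. fst (trunc_sol z (int N) n)" and g = "\<lambda>j. growth_bound * cmod (u (int j))",
      OF steps summable_growth_bound_u]
  show "uniform_limit (cball 0 1) (\<lambda>N z. fst (trunc_sol z (int N) n)) (psi1 n) sequentially"
    using lim(1) unfolding psi1_def[abs_def] .
  show "z \<in> cball 0 1 \<Longrightarrow>
      dist (psi1 n z) (fst (trunc_sol z (int N) n)) \<le> (\<Sum>j. growth_bound * cmod (u (int (j + N))))"
    using lim(2) unfolding psi1_def .
qed

lemma psi2_uniform_limit:
  shows "uniform_limit (cball 0 1) (\<lambda>N z. snd (trunc_sol z (int N) n)) (psi2 n) sequentially"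
    and "z \<in> cball 0 1 \<Longrightarrow>
      dist (psi2 n z) (snd (trunc_sol z (int N) n)) \<le> (\<Sum>j. growth_bound * cmod (u (int (j + N))))"
proof -
  have steps: "dist (snd (trunc_sol z (int (Suc N)) n)) (snd (trunc_sol z (int N) n))
      \<le> growth_bound * cmod (u (int N))" if "z \<in> cball 0 1" for z N
    using order_trans[OF dist_snd_le_l1_dist trunc_sol_Suc_l1_dist_le[of z "int N" n]] that
    by (simp only: of_nat_Suc add.commute mem_cball_0)
  note lim = uniform_limit_if_summable_steps[where X = "cball 0 1"
      and f = "\<lambda>N z. snd (trunc_sol z (int N) n)" and g = "\<lambda>j. growth_bound * cmod (u (int j))",
      OF steps summable_growth_bound_u]
  show "uniform_limit (cball 0 1) (\<lambda>N z. snd (trunc_sol z (int N) n)) (psi2 n) sequentially"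
    using lim(1) unfolding psi2_def[abs_def] .
  show "z \<in> cball 0 1 \<Longrightarrow>
      dist (psi2 n z) (snd (trunc_sol z (int N) n)) \<le> (\<Sum>j. growth_bound * cmod (u (int (j + N))))"
    using lim(2) unfolding psi2_def .
qed

lemma psi2_holomorphic: "continuous_on (cball 0 1) (psi2 n) \<and> psi2 n holomorphic_on ball 0 1"
proof (rule holomorphic_uniform_limit_sequentially[OF _ psi2_uniform_limit(1)])
  fix N
  have "(\<lambda>z. snd (trunc_sol z (int N) n)) holomorphic_on UNIV"
    using trunc_sol_holomorphic by blast
  then show "continuous_on (cball 0 1) (\<lambda>z. snd (trunc_sol z (int N) n)) \<and>
      (\<lambda>z. snd (trunc_sol z (int N) n)) holomorphic_on ball 0 1"
    using holomorphic_on_subset holomorphic_on_imp_continuous_on by blast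
qed

lemma trunc_sol_LIMSEQ_psi:
  assumes "cmod z \<le> 1"
  shows "(\<lambda>N. fst (trunc_sol z (int N) n)) \<longlonglongrightarrow> psi1 n z"
    and "(\<lambda>N. snd (trunc_sol z (int N) n)) \<longlonglongrightarrow> psi2 n z"
  using tendsto_uniform_limitI[OF psi1_uniform_limit(1)[of n], of z]
    tendsto_uniform_limitI[OF psi2_uniform_limit(1)[of n], of z] assms
  by auto

lemma psi_step:
  assumes "cmod z \<le> 1"
  shows "(psi1 n z, psi2 n z) = step n z (psi1 (n + 1) z, psi2 (n + 1) z)"
proof -
  have lim: "(\<lambda>N. trunc_sol z (int N) k) \<longlonglongrightarrow> (psi1 k z, psi2 k z)" for k
    using tendsto_Pair[OF trunc_sol_LIMSEQ_psi[OF assms, of k]] by simp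
  have "eventually (\<lambda>N. trunc_sol z (int N) n = step n z (trunc_sol z (int N) (n + 1)))
      sequentially"
    using eventually_gt_at_top[of "nat n"] by eventually_elim (simp add: trunc_sol_less)
  then have "(\<lambda>N. step n z (trunc_sol z (int N) (n + 1))) \<longlonglongrightarrow> (psi1 n z, psi2 n z)"
    by (rule Lim_transform_eventually[OF lim])
  moreover have "(\<lambda>N. step n z (trunc_sol z (int N) (n + 1)))
      \<longlonglongrightarrow> step n z (psi1 (n + 1) z, psi2 (n + 1) z)"
    using lim unfolding step_def by (intro tendsto_intros)
  ultimately show ?thesis
    using LIMSEQ_unique by blast
qed

lemma psi_norm_le:
  assumes "cmod z \<le> 1"
  shows "cmod (psi1 n z) + cmod (psi2 n z) \<le> growth_bound"
proof -
  have "(\<lambda>N. cmod (fst (trunc_sol z (int N) n)) + cmod (snd (trunc_sol z (int N) n)))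
      \<longlonglongrightarrow> cmod (psi1 n z) + cmod (psi2 n z)"
    using trunc_sol_LIMSEQ_psi[OF assms] by (intro tendsto_intros)
  then show ?thesis
    by (rule LIMSEQ_le_const2) (use trunc_sol_norm_le[OF assms] in blast)
qed

lemma psi_tendsto_at_top:
  assumes "cmod z \<le> 1"
  shows "((\<lambda>n. psi1 n z) \<longlongrightarrow> 0) at_top" and "((\<lambda>n. psi2 n z) \<longlongrightarrow> 1) at_top"
proof -
  have tail: "(\<lambda>N. \<Sum>j. growth_bound * cmod (u (int (j + N)))) \<longlonglongrightarrow> 0"
    using tendsto_suminf_tail_0[OF summable_growth_bound_u] by simp
  have bounds: "dist (psi1 n z) 0 \<le> (\<Sum>j. growth_bound * cmod (u (int (j + nat n))))"
    "dist (psi2 n z) 1 \<le> (\<Sum>j. growth_bound * cmod (u (int (j + nat n))))" if "n \<ge> 0" for n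
  proof -
    have "trunc_sol z (int (nat n)) n = (0, 1)"
      using that by (simp add: trunc_sol_ge)
    then show "dist (psi1 n z) 0 \<le> (\<Sum>j. growth_bound * cmod (u (int (j + nat n))))"
      "dist (psi2 n z) 1 \<le> (\<Sum>j. growth_bound * cmod (u (int (j + nat n))))"
      using psi1_uniform_limit(2)[of z n "nat n"] psi2_uniform_limit(2)[of z n "nat n"] assms
      by auto
  qed
  show "((\<lambda>n. psi1 n z) \<longlongrightarrow> 0) at_top"
    by (rule tendsto_at_top_int_if_dist_le[OF _ tail]) (erule bounds(1))
  show "((\<lambda>n. psi2 n z) \<longlongrightarrow> 1) at_top"
    by (rule tendsto_at_top_int_if_dist_le[OF _ tail]) (erule bounds(2))
qed

definition inv_Tl :: "complex \<Rightarrow> complex" where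
  "inv_Tl z = lim (\<lambda>N. psi2 (- int N) z)"

lemma summable_growth_bound_v: "summable (\<lambda>j. growth_bound * cmod (v (- int j - 1)))"
  using abs_summable_v unfolding abs_summable_int_def
  by (intro summable_mult summable_shift_neg[of "\<lambda>k. cmod (v k)"]) simp

lemma inv_Tl_uniform_limit:
  shows "uniform_limit (cball 0 1) (\<lambda>N. psi2 (- int N)) inv_Tl sequentially"
    and "z \<in> cball 0 1 \<Longrightarrow>
      dist (inv_Tl z) (psi2 (- int N) z) \<le> (\<Sum>j. growth_bound * cmod (v (- int (j + N) - 1)))"
proof -
  have steps: "dist (psi2 (- int (Suc N)) z) (psi2 (- int N) z)
      \<le> growth_bound * cmod (v (- int N - 1))"
    if "z \<in> cball 0 1" for z N
  proof -
    have "psi2 (- int N - 1) z = v (- int N - 1) * psi1 (- int N) z + psi2 (- int N) z"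
      using psi_step[of z "- int N - 1"] that by (simp add: step_def)
    then have "dist (psi2 (- int N - 1) z) (psi2 (- int N) z)
        = cmod (v (- int N - 1)) * cmod (psi1 (- int N) z)"
      by (simp add: dist_norm norm_mult)
    also have "\<dots> \<le> cmod (v (- int N - 1)) * growth_bound"
    proof -
      have "cmod (psi1 (- int N) z) \<le> growth_bound"
        using psi_norm_le[of z "- int N"] that norm_ge_zero[of "psi2 (- int N) z"]
        by (simp del: norm_ge_zero)
      then show ?thesis
        by (simp add: mult_left_mono)
    qed
    finally have "dist (psi2 (- int N - 1) z) (psi2 (- int N) z)
        \<le> growth_bound * cmod (v (- int N - 1))"
      by (simp add: mult.commute)
    moreover have "- int (Suc N) = - int N - 1"
      by simp
    ultimately show ?thesis
      by (simp only:)
  qed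
  note lim = uniform_limit_if_summable_steps[where X = "cball 0 1" and f = "\<lambda>N. psi2 (- int N)"
      and g = "\<lambda>j. growth_bound * cmod (v (- int j - 1))", OF steps summable_growth_bound_v]
  show "uniform_limit (cball 0 1) (\<lambda>N. psi2 (- int N)) inv_Tl sequentially"
    using lim(1) unfolding inv_Tl_def[abs_def] .
  show "z \<in> cball 0 1 \<Longrightarrow>
      dist (inv_Tl z) (psi2 (- int N) z) \<le> (\<Sum>j. growth_bound * cmod (v (- int (j + N) - 1)))"
    using lim(2) unfolding inv_Tl_def .
qed

lemma inv_Tl_holomorphic: "continuous_on (cball 0 1) inv_Tl \<and> inv_Tl holomorphic_on ball 0 1"
  by (rule holomorphic_uniform_limit_sequentially[OF psi2_holomorphic inv_Tl_uniform_limit(1)])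

lemma psi2_tendsto_inv_Tl:
  assumes "cmod z \<le> 1"
  shows "((\<lambda>n. psi2 n z) \<longlongrightarrow> inv_Tl z) at_bot"
  unfolding tendsto_at_bot_iff_tendsto_uminus_at_top
proof (rule tendsto_at_top_int_if_dist_le)
  show "(\<lambda>N. \<Sum>j. growth_bound * cmod (v (- int (j + N) - 1))) \<longlonglongrightarrow> 0"
    using tendsto_suminf_tail_0[OF summable_growth_bound_v] by simp
  show "dist (psi2 (- n) z) (inv_Tl z) \<le> (\<Sum>j. growth_bound * cmod (v (- int (j + nat n) - 1)))"
    if "n \<ge> 0" for n
    using inv_Tl_uniform_limit(2)[of z "nat n"] assms that by (simp add: dist_commute)
qed

lemma jost_psi_of_psi:
  assumes "cmod z = 1"
  shows "jost_psi u v z (\<lambda>n. z powi n * psi1 n z) (\<lambda>n. z powi n * psi2 n z)"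
proof -
  have "z \<noteq> 0"
    using assms by auto
  have "solves_sys u v z (\<lambda>n. z powi n * psi1 n z) (\<lambda>n. z powi n * psi2 n z)"
    unfolding solves_sys_iff_step[OF \<open>z \<noteq> 0\<close>]
      nonzero_mult_div_cancel_left[OF power_int_not_zero[OF disjI1[OF \<open>z \<noteq> 0\<close>]]]
    by (intro allI psi_step) (use assms in simp)
  moreover have "((\<lambda>n. z powi n * psi1 n z) \<longlongrightarrow> 0) at_top"
    using psi_tendsto_at_top(1)[of z] assms
    by (simp add: tendsto_norm_zero_iff[symmetric, of "\<lambda>n. z powi n * psi1 n z"] norm_mult
        norm_power_int tendsto_norm_zero)
  moreover have "((\<lambda>n. z powi n * psi2 n z / z powi n) \<longlongrightarrow> 1) at_top"
    using psi_tendsto_at_top(2)[of z] assms \<open>z \<noteq> 0\<close> by simp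
  ultimately show ?thesis
    unfolding jost_psi_def by blast
qed

lemma jost_psi_eq_psi2:
  assumes z: "cmod z = 1" and jost: "jost_psi u v z xi eta"
  shows "eta n / z powi n = psi2 n z"
proof -
  have "z \<noteq> 0"
    using z by auto
  define p where "p k = (xi k / z powi k, eta k / z powi k)" for k
  define q where "q k = (psi1 k z, psi2 k z)" for k
  have sys: "solves_sys u v z xi eta" and xi: "(xi \<longlongrightarrow> 0) at_top"
    and eta: "((\<lambda>k. eta k / z powi k) \<longlongrightarrow> 1) at_top"
    using jost unfolding jost_psi_def by blast+
  have p_step: "p k = step k z (p (k + 1))" for k
    using sys unfolding solves_sys_iff_step[OF \<open>z \<noteq> 0\<close>] p_def by blast
  have q_step: "q k = step k z (q (k + 1))" for k
    unfolding q_def by (rule psi_step) (use z in simp)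
  have "((\<lambda>k. xi k / z powi k) \<longlongrightarrow> 0) at_top"
    using xi z by (simp add: tendsto_norm_zero_iff[symmetric, of "\<lambda>k. xi k / z powi k"] norm_divide
        norm_power_int tendsto_norm_zero)
  then have "((\<lambda>k. cmod (xi k / z powi k - psi1 k z) + cmod (eta k / z powi k - psi2 k z))
      \<longlongrightarrow> cmod (0 - 0) + cmod (1 - 1)) at_top"
    using eta psi_tendsto_at_top[of z] z by (intro tendsto_intros) auto
  then have lim: "((\<lambda>k. l1_dist (p k) (q k)) \<longlongrightarrow> 0) at_top"
    by (simp add: l1_dist_def p_def q_def)
  have bound: "l1_dist (p n) (q n) \<le> growth_bound * l1_dist (p k) (q k)" if "n \<le> k" for k
    by (rule l1_dist_orbits_le[where z = z and p = p and q = q, OF _ that])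
      (use z in simp, rule p_step, rule q_step)
  have "eventually (\<lambda>k. l1_dist (p n) (q n) \<le> growth_bound * l1_dist (p k) (q k)) at_top"
    using eventually_ge_at_top[of n] by (rule eventually_mono) (erule bound)
  then have "l1_dist (p n) (q n) \<le> growth_bound * 0"
    using tendsto_le[OF trivial_limit_at_top_linorder tendsto_mult_left[OF lim] tendsto_const]
    by blast
  then have "cmod (snd (p n) - snd (q n)) \<le> 0"
    using norm_ge_zero[of "fst (p n) - fst (q n)"] unfolding l1_dist_def by linarith
  then show ?thesis
    unfolding p_def q_def by simp
qed

lemma invTl_at_inv_Tl:
  assumes "cmod z = 1"
  shows "invTl_at u v z (inv_Tl z)"
  unfolding invTl_at_def
proof (intro conjI allI impI)
  show "\<exists>xi eta. jost_psi u v z xi eta"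
    using jost_psi_of_psi[OF assms] by blast
  fix xi eta assume "jost_psi u v z xi eta"
  then have "(\<lambda>n. eta n / z powi n) = (\<lambda>n. psi2 n z)"
    using jost_psi_eq_psi2[OF assms] by blast
  then show "((\<lambda>n. eta n / z powi n) \<longlongrightarrow> inv_Tl z) at_bot"
    using psi2_tendsto_inv_Tl assms by simp
qed

definition quad_bound :: real where "quad_bound = growth_bound * (1 + total_weight)"

definition quart_bound :: real where "quart_bound = quad_bound * (1 + total_weight^2)"

lemma quad_bound_nonneg: "quad_bound \<ge> 0"
  and quart_bound_nonneg: "quart_bound \<ge> 0"
  unfolding quad_bound_def quart_bound_def using growth_bound_ge_1 total_weight_nonneg by simp_all

lemma sum_norm_v_le_total_weight:
  assumes "finite A"
  shows "(\<Sum>j\<in>A. cmod (v j)) \<le> total_weight"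
proof -
  have "(\<Sum>j\<in>A. cmod (v j)) \<le> sum weight A"
    by (intro sum_mono) (simp add: weight_def)
  also have "\<dots> \<le> total_weight"
    by (rule sum_weight_le_total_weight[OF assms])
  finally show ?thesis .
qed

lemma trunc_sol_fst_le:
  assumes z: "cmod z \<le> 1"
  shows "cmod (fst (trunc_sol z N n)) \<le> cmod z ^ 2 * quad_bound"
proof (cases "N \<le> n")
  case True
  then show ?thesis
    using quad_bound_nonneg by (simp add: trunc_sol_ge)
next
  case False
  define a b where "a = fst (trunc_sol z N (n + 1))" and "b = snd (trunc_sol z N (n + 1))"
  have "cmod (a + u n * b) \<le> cmod a + cmod (u n) * cmod b"
    using norm_triangle_ineq[of a "u n * b"] by (simp add: norm_mult)
  also have "\<dots> \<le> cmod a + total_weight * cmod b"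
    using norm_u_le_total_weight[of n] by (simp add: mult_right_mono)
  also have "\<dots> \<le> (1 + total_weight) * (cmod a + cmod b)"
    using total_weight_nonneg by (simp add: algebra_simps)
  also have "\<dots> \<le> (1 + total_weight) * growth_bound"
    using trunc_sol_norm_le[OF z, of N "n + 1"] total_weight_nonneg
    unfolding a_def b_def by (intro mult_left_mono) auto
  finally have "cmod (a + u n * b) \<le> quad_bound"
    unfolding quad_bound_def by (simp add: mult.commute)
  moreover have "fst (trunc_sol z N n) = z^2 * (a + u n * b)"
    using False by (simp add: trunc_sol_less step_def a_def b_def)
  ultimately show ?thesis
    by (simp add: norm_mult norm_power mult_left_mono)
qed

lemma trunc_sol_snd_eq_sum:
  assumes "n \<le> N"
  shows "snd (trunc_sol z N n) = 1 + (\<Sum>j\<in>{n..<N}. v j * fst (trunc_sol z N (j + 1)))"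
  using assms
proof (induction "nat (N - n)" arbitrary: n)
  case 0
  then show ?case by (simp add: trunc_sol_ge)
next
  case (Suc k)
  then have "n < N" by simp
  have "snd (trunc_sol z N (n + 1)) = 1 + (\<Sum>j\<in>{n + 1..<N}. v j * fst (trunc_sol z N (j + 1)))"
    using Suc.hyps \<open>n < N\<close> by (intro Suc.hyps(1)) auto
  moreover have "{n..<N} = insert n {n + 1..<N}"
    using \<open>n < N\<close> by auto
  ultimately show ?case
    by (simp add: trunc_sol_less[OF \<open>n < N\<close>] step_def)
qed

lemma trunc_sol_snd_minus_1_le:
  assumes z: "cmod z \<le> 1"
  shows "cmod (snd (trunc_sol z N n) - 1) \<le> cmod z ^ 2 * (total_weight * quad_bound)"
proof (cases "n \<le> N")
  case False
  then show ?thesis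
    using total_weight_nonneg quad_bound_nonneg by (simp add: trunc_sol_ge)
next
  case True
  have "cmod (snd (trunc_sol z N n) - 1) = cmod (\<Sum>j\<in>{n..<N}. v j * fst (trunc_sol z N (j + 1)))"
    using trunc_sol_snd_eq_sum[OF True] by simp
  also have "\<dots> \<le> (\<Sum>j\<in>{n..<N}. cmod (v j) * (cmod z ^ 2 * quad_bound))"
    by (intro sum_norm_le) (simp add: norm_mult mult_left_mono trunc_sol_fst_le[OF z])
  also have "\<dots> = (\<Sum>j\<in>{n..<N}. cmod (v j)) * (cmod z ^ 2 * quad_bound)"
    by (simp add: sum_distrib_right)
  also have "\<dots> \<le> total_weight * (cmod z ^ 2 * quad_bound)"
    using quad_bound_nonneg by (intro mult_right_mono sum_norm_v_le_total_weight) auto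
  finally show ?thesis
    by (simp add: algebra_simps)
qed

lemma trunc_sol_fst_expansion_le:
  assumes z: "cmod z \<le> 1" and "n < N"
  shows "cmod (fst (trunc_sol z N n) - z^2 * u n) \<le> cmod z ^ 4 * quart_bound"
proof -
  define a b where "a = fst (trunc_sol z N (n + 1))" and "b = snd (trunc_sol z N (n + 1))"
  have "cmod (a + u n * (b - 1)) \<le> cmod a + cmod (u n) * cmod (b - 1)"
    using norm_triangle_ineq[of a "u n * (b - 1)"] by (simp add: norm_mult)
  also have "\<dots> \<le>
      cmod z ^ 2 * quad_bound + total_weight * (cmod z ^ 2 * (total_weight * quad_bound))"
    using trunc_sol_fst_le[OF z, of N "n + 1"] trunc_sol_snd_minus_1_le[OF z, of N "n + 1"]
      norm_u_le_total_weight[of n] total_weight_nonneg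
    unfolding a_def b_def by (intro add_mono mult_mono) auto
  also have "\<dots> = cmod z ^ 2 * quart_bound"
    by (simp add: quart_bound_def algebra_simps power2_eq_square)
  finally have bound: "cmod (a + u n * (b - 1)) \<le> cmod z ^ 2 * quart_bound" .
  have "fst (trunc_sol z N n) - z^2 * u n = z^2 * (a + u n * (b - 1))"
    using \<open>n < N\<close> by (simp add: trunc_sol_less step_def a_def b_def algebra_simps)
  then have "cmod (fst (trunc_sol z N n) - z^2 * u n) = cmod z ^ 2 * cmod (a + u n * (b - 1))"
    by (simp add: norm_mult norm_power)
  also have "\<dots> \<le> cmod z ^ 2 * (cmod z ^ 2 * quart_bound)"
    by (rule mult_left_mono[OF bound]) simp
  also have "\<dots> = cmod z ^ 4 * quart_bound"
    by (simp add: power4_eq_xxxx power2_eq_square mult_ac)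
  finally show ?thesis .
qed

lemma trunc_sol_snd_expansion_le:
  assumes z: "cmod z \<le> 1" and "n < N"
  shows "cmod (snd (trunc_sol z N n) - 1 - z^2 * (\<Sum>k\<in>{n..<N - 1}. v k * u (k + 1)))
    \<le> cmod z ^ 4 * (total_weight * quart_bound)"
proof -
  have "{n..<N} = insert (N - 1) {n..<N - 1}"
    using \<open>n < N\<close> by auto
  then have "snd (trunc_sol z N n) - 1 - z^2 * (\<Sum>k\<in>{n..<N - 1}. v k * u (k + 1))
      = (\<Sum>j\<in>{n..<N - 1}. v j * (fst (trunc_sol z N (j + 1)) - z^2 * u (j + 1)))"
    using trunc_sol_snd_eq_sum[of n N z] \<open>n < N\<close>
    by (simp add: trunc_sol_ge sum_distrib_left sum_subtractf algebra_simps)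
  also have "cmod \<dots> \<le> (\<Sum>j\<in>{n..<N - 1}. cmod (v j) * (cmod z ^ 4 * quart_bound))"
    by (intro sum_norm_le)
      (auto simp: norm_mult intro!: mult_left_mono trunc_sol_fst_expansion_le[OF z])
  also have "\<dots> = (\<Sum>j\<in>{n..<N - 1}. cmod (v j)) * (cmod z ^ 4 * quart_bound)"
    by (simp add: sum_distrib_right)
  also have "\<dots> \<le> total_weight * (cmod z ^ 4 * quart_bound)"
    using quart_bound_nonneg by (intro mult_right_mono sum_norm_v_le_total_weight) auto
  finally show ?thesis
    by (simp add: algebra_simps)
qed

lemma uv_shift_summable_on: "(\<lambda>k. u (k + 1) * v k) summable_on UNIV"
proof (rule abs_summable_summable)
  show "(\<lambda>k. norm (u (k + 1) * v k)) summable_on UNIV"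
  proof (rule summable_on_comparison_test)
    show "(\<lambda>k. total_weight * weight k) summable_on UNIV"
      using weight_summable_on by (rule summable_on_cmult_right)
    fix k :: int
    have "cmod (u (k + 1)) * cmod (v k) \<le> total_weight * cmod (v k)"
      by (rule mult_right_mono[OF norm_u_le_total_weight]) simp
    also have "\<dots> \<le> total_weight * weight k"
      using total_weight_nonneg by (intro mult_left_mono) (auto simp: weight_def)
    finally show "norm (u (k + 1) * v k) \<le> total_weight * weight k"
      by (simp add: norm_mult)
  qed simp
qed

lemma trunc_sol_diagonal_LIMSEQ:
  assumes z: "cmod z \<le> 1"
  shows "(\<lambda>N. snd (trunc_sol z (int N) (- int N))) \<longlonglongrightarrow> inv_Tl z"
proof -
  let ?tail_u = "\<lambda>N. \<Sum>j. growth_bound * cmod (u (int (j + N)))"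
  let ?tail_v = "\<lambda>N. \<Sum>j. growth_bound * cmod (v (- int (j + N) - 1))"
  have bound: "norm (snd (trunc_sol z (int N) (- int N)) - inv_Tl z) \<le> ?tail_u N + ?tail_v N" for N
  proof -
    have "norm (snd (trunc_sol z (int N) (- int N)) - inv_Tl z)
        \<le> dist (psi2 (- int N) z) (snd (trunc_sol z (int N) (- int N))) +
          dist (inv_Tl z) (psi2 (- int N) z)"
      using dist_triangle[of "snd (trunc_sol z (int N) (- int N))" "inv_Tl z" "psi2 (- int N) z"]
      by (simp add: dist_norm norm_minus_commute)
    then show ?thesis
      using psi2_uniform_limit(2)[of z "- int N" N] inv_Tl_uniform_limit(2)[of z N] z by simp
  qed
  have "(\<lambda>N. ?tail_u N + ?tail_v N) \<longlonglongrightarrow> 0 + 0"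
    using tendsto_suminf_tail_0[OF summable_growth_bound_u]
      tendsto_suminf_tail_0[OF summable_growth_bound_v]
    by (intro tendsto_add) simp_all
  then show ?thesis
    unfolding Lim_null[of _ "inv_Tl z"]
    by (intro Lim_null_comparison[OF always_eventually[OF allI[OF bound]]]) simp
qed

lemma inv_Tl_expansion_le:
  assumes z: "cmod z \<le> 1"
  shows "cmod (inv_Tl z - 1 - z^2 * (\<Sum>\<^sub>\<infinity>k. u (k + 1) * v k))
    \<le> cmod z ^ 4 * (total_weight * quart_bound)"
proof -
  define S where "S N = (\<Sum>k\<in>{- int N..<int N - 1}. v k * u (k + 1))" for N
  define R where "R N = snd (trunc_sol z (int N) (- int N)) - 1 - z^2 * S N" for N
  have "S \<longlonglongrightarrow> (\<Sum>\<^sub>\<infinity>k. u (k + 1) * v k)"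
    unfolding S_def using tendsto_sum_symmetric_int_intervals[OF uv_shift_summable_on]
    by (simp add: mult.commute)
  then have lim: "(\<lambda>N. cmod (R N)) \<longlonglongrightarrow> cmod (inv_Tl z - 1 - z^2 * (\<Sum>\<^sub>\<infinity>k. u (k + 1) * v k))"
    unfolding R_def by (intro tendsto_intros trunc_sol_diagonal_LIMSEQ[OF z])
  have "cmod (R N) \<le> cmod z ^ 4 * (total_weight * quart_bound)" if "N \<ge> 1" for N
    using trunc_sol_snd_expansion_le[OF z, of "- int N" "int N"] that unfolding R_def S_def by simp
  then show ?thesis
    by (intro LIMSEQ_le_const2[OF lim]) blast
qed

lemma inv_Tl_bigo: "(\<lambda>z. inv_Tl z - (1 + z^2 * (\<Sum>\<^sub>\<infinity>k. u (k + 1) * v k))) \<in> O[at 0](\<lambda>z. z^4)"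
proof (rule bigoI)
  let ?S = "\<Sum>\<^sub>\<infinity>k. u (k + 1) * v k" and ?K = "total_weight * quart_bound"
  have "cmod (inv_Tl z - (1 + z^2 * ?S)) \<le> ?K * cmod (z^4)" if "cmod z < 1" for z
    using inv_Tl_expansion_le[of z, unfolded diff_diff_eq] that
    by (simp add: norm_power mult.commute)
  then show "\<forall>\<^sub>F z in at 0. cmod (inv_Tl z - (1 + z^2 * ?S)) \<le> ?K * cmod (z^4)"
    unfolding eventually_at by (intro exI[of _ 1]) auto
qed

end

lemma invTl_extension:
  assumes "abs_summable_int u" and "abs_summable_int v"
  obtains B where "ext_inside (invTl_at u v) B"
    and "(\<lambda>z. B z - (1 + z^2 * (\<Sum>\<^sub>\<infinity>k. u (k + 1) * v k))) \<in> O[at 0](\<lambda>z. z^4)"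
proof -
  interpret summable_potentials u v
    using assms by unfold_locales
  show ?thesis
    using that inv_Tl_holomorphic invTl_at_inv_Tl inv_Tl_bigo unfolding ext_inside_def by blast
qed

section \<open>Inversion \<open>z \<mapsto> 1/z\<close> and reflection \<open>n \<mapsto> -n - 1\<close>\<close>

lemma power_int_one_over: "(1 / z) powi n = z powi (- n)"
  for z :: "'a::field"
  by (simp add: power_int_minus divide_inverse power_int_inverse)

lemma solves_sys_swap:
  assumes "z \<noteq> 0"
  shows "solves_sys u v z xi eta \<longleftrightarrow> solves_sys v u (1 / z) eta xi"
  using assms unfolding solves_sys_def by (simp add: field_simps conj_commute)

lemma jost_psibar_iff_jost_psi:
  assumes "z \<noteq> 0"
  shows "jost_psibar u v z xi eta \<longleftrightarrow> jost_psi v u (1 / z) eta xi"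
  unfolding jost_psibar_def jost_psi_def solves_sys_swap[OF assms] power_int_one_over by auto

lemma jost_phibar_iff_jost_phi:
  assumes "z \<noteq> 0"
  shows "jost_phibar u v z xi eta \<longleftrightarrow> jost_phi v u (1 / z) eta xi"
  unfolding jost_phibar_def jost_phi_def solves_sys_swap[OF assms] power_int_one_over by auto

lemma invTlbar_at_iff_invTl_at:
  assumes "z \<noteq> 0"
  shows "invTlbar_at u v z c \<longleftrightarrow> invTl_at v u (1 / z) c"
  unfolding invTlbar_at_def invTl_at_def jost_psibar_iff_jost_psi[OF assms] power_int_one_over
  by blast

lemma invTrbar_at_iff_invTr_at:
  assumes "z \<noteq> 0"
  shows "invTrbar_at u v z c \<longleftrightarrow> invTr_at v u (1 / z) c"
  unfolding invTrbar_at_def invTr_at_def jost_phibar_iff_jost_phi[OF assms] power_int_one_over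
  by auto

definition reflect :: "(int \<Rightarrow> 'a::ab_group_add) \<Rightarrow> int \<Rightarrow> 'a" where
  "reflect p n = - p (- n - 1)"

lemma abs_summable_int_reflect:
  fixes p :: "int \<Rightarrow> 'a::real_normed_vector"
  assumes "abs_summable_int p"
  shows "abs_summable_int (reflect p)"
proof -
  have "summable (\<lambda>j. norm (p (- int j - 1)))"
    using assms unfolding abs_summable_int_def
    by (intro summable_shift_neg[of "\<lambda>k. norm (p k)"]) simp
  moreover have "(\<lambda>j. norm (reflect p (- int (Suc j)))) = (\<lambda>j. norm (p (int j)))"
    by (simp add: reflect_def)
  then have "summable (\<lambda>j. norm (reflect p (- int j)))"
    using assms summable_Suc_iff[of "\<lambda>j. norm (reflect p (- int j))"]
    unfolding abs_summable_int_def by simp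
  ultimately show ?thesis
    unfolding abs_summable_int_def by (simp add: reflect_def)
qed

lemma infsum_reflect:
  "(\<Sum>\<^sub>\<infinity>k. reflect p (k + 1) * reflect q k) = (\<Sum>\<^sub>\<infinity>k. q (k + 1) * p k)"
  for p q :: "int \<Rightarrow> 'a::{comm_ring, t2_space}"
proof -
  define h :: "int \<Rightarrow> int" where "h k = - k - 2" for k
  have "inj h"
    unfolding h_def inj_on_def by simp
  moreover have "range h = UNIV"
    unfolding h_def by (auto simp: image_iff intro!: exI[of _ "- x - 2" for x])
  ultimately have "(\<Sum>\<^sub>\<infinity>k. q (k + 1) * p k) = (\<Sum>\<^sub>\<infinity>k. q (h k + 1) * p (h k))"
    using infsum_reindex[of h UNIV "\<lambda>k. q (k + 1) * p k"] by (simp add: o_def)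
  also have "\<dots> = (\<Sum>\<^sub>\<infinity>k. reflect p (k + 1) * reflect q k)"
    unfolding reflect_def h_def by (simp add: algebra_simps)
  finally show ?thesis ..
qed

lemma Dinf_commute: "Dinf v u = Dinf u v"
  unfolding Dinf_def by (simp add: mult.commute)

text \<open>One step of the reflected system, solved for the original one; this is where
  \<open>1 - u v \<noteq> 0\<close> is needed.\<close>
lemma reflected_step_inverse:
  fixes z d u v x y x' y' :: complex
  assumes "z \<noteq> 0" and d: "d = 1 - u * v" "d \<noteq> 0"
    and x: "d * x' = (x - u * z^2 * y) / z" and y: "d * z * y' = z^2 * y - v * x"
  shows "x = z * x' + z * u * y'" and "y = v * x' / z + y' / z"
proof -
  have x1: "x = d * z * x' + u * (z^2 * y)"
    using x \<open>z \<noteq> 0\<close> by (simp add: field_simps power2_eq_square)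
  have y1: "z^2 * y - v * x = d * z * y'"
    using y by simp
  have "d * x = x - u * v * x"
    by (simp add: d(1) algebra_simps)
  also have "\<dots> = d * z * x' + u * (z^2 * y - v * x)"
    using x1 by (simp add: algebra_simps)
  also have "\<dots> = d * (z * x' + z * u * y')"
    unfolding y1 by (simp add: algebra_simps)
  finally show x_eq: "x = z * x' + z * u * y'"
    using d(2) by simp
  have "z * (y * z - (y' + v * x')) = 0"
    using y d(1) unfolding x_eq by (simp add: algebra_simps power2_eq_square)
  then have "y * z = y' + v * x'"
    using \<open>z \<noteq> 0\<close> by simp
  then show "y = v * x' / z + y' / z"
    using \<open>z \<noteq> 0\<close> by (simp add: field_simps)
qed

locale nondegenerate_potentials = summable_potentials +
  assumes one_minus_uv_nonzero: "1 - u n * v n \<noteq> 0"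
begin

text \<open>\<open>transfer_det n\<close> is the determinant of the transfer matrix of the system at \<open>n\<close>.\<close>
definition transfer_det :: "int \<Rightarrow> complex" where "transfer_det n = 1 - u n * v n"

lemma transfer_det_nonzero: "transfer_det n \<noteq> 0"
  unfolding transfer_det_def by (rule one_minus_uv_nonzero)

lemma norm_transfer_det_minus_1_le: "norm (transfer_det n - 1) \<le> total_weight * cmod (u n)"
  using mult_left_mono[OF norm_v_le_total_weight[of n], of "cmod (u n)"]
  by (simp add: transfer_det_def norm_mult mult.commute)

definition neg_prod :: complex where "neg_prod = prodinf (\<lambda>k. transfer_det (- int k - 1))"

definition nonneg_prod :: complex where "nonneg_prod = prodinf (\<lambda>k. transfer_det (int k))"

lemma convergent_prod_transfer_det:
  "convergent_prod (\<lambda>k. transfer_det (- int k - 1))" "convergent_prod (\<lambda>k. transfer_det (int k))"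
proof -
  have bound: "summable (\<lambda>k. total_weight * cmod (u (- int k - 1)))"
    "summable (\<lambda>k. total_weight * cmod (u (int k)))"
    using abs_summable_u unfolding abs_summable_int_def
    by (auto intro!: summable_mult summable_shift_neg[of "\<lambda>k. cmod (u k)"])
  have "summable (\<lambda>k. norm (transfer_det (- int k - 1) - 1))"
    "summable (\<lambda>k. norm (transfer_det (int k) - 1))"
    by (rule summable_comparison_test'[OF bound(1)], simp add: norm_transfer_det_minus_1_le)
      (rule summable_comparison_test'[OF bound(2)], simp add: norm_transfer_det_minus_1_le)
  then show "convergent_prod (\<lambda>k. transfer_det (- int k - 1))"
    "convergent_prod (\<lambda>k. transfer_det (int k))"
    by (auto intro: abs_convergent_prod_imp_convergent_prod summable_imp_abs_convergent_prod)
qed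

lemma neg_prod_nonzero: "neg_prod \<noteq> 0" and nonneg_prod_nonzero: "nonneg_prod \<noteq> 0"
  unfolding neg_prod_def nonneg_prod_def
  using prodinf_nonzero[OF convergent_prod_transfer_det(1) transfer_det_nonzero]
    prodinf_nonzero[OF convergent_prod_transfer_det(2) transfer_det_nonzero]
  by auto

lemma LIMSEQ_prod_transfer_det: "(\<lambda>N. \<Prod>k<N. transfer_det (- int k - 1)) \<longlonglongrightarrow> neg_prod"
  "(\<lambda>N. \<Prod>k<N. transfer_det (int k)) \<longlonglongrightarrow> nonneg_prod"
  unfolding neg_prod_def nonneg_prod_def
  using convergent_prod_LIMSEQ[OF convergent_prod_transfer_det(1)]
    convergent_prod_LIMSEQ[OF convergent_prod_transfer_det(2)]
  by (simp_all add: LIMSEQ_lessThan_iff_atMost)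

text \<open>\<open>left_prod n\<close> is the infinite product of \<open>transfer_det j\<close> over \<open>j < n\<close>, written through the
  products over \<open>j < 0\<close> and \<open>0 \<le> j < n\<close>.\<close>
definition left_prod :: "int \<Rightarrow> complex" where
  "left_prod n = (if n \<le> 0 then neg_prod / (\<Prod>k<nat (- n). transfer_det (- int k - 1))
     else neg_prod * (\<Prod>k<nat n. transfer_det (int k)))"

lemma left_prod_nonneg: "0 \<le> n \<Longrightarrow> left_prod n = neg_prod * (\<Prod>k<nat n. transfer_det (int k))"
  by (cases "n = 0") (simp_all add: left_prod_def)

lemma left_prod_nonzero: "left_prod n \<noteq> 0"
  unfolding left_prod_def using neg_prod_nonzero transfer_det_nonzero by simp

lemma left_prod_succ: "left_prod (n + 1) = left_prod n * transfer_det n"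
proof (cases "0 \<le> n")
  case True
  then have "nat (n + 1) = Suc (nat n)"
    by simp
  then show ?thesis
    using True by (simp add: left_prod_nonneg)
next
  case False
  then have "nat (- n) = Suc (nat (- (n + 1)))" and "- int (nat (- (n + 1))) - 1 = n"
    by simp_all
  then have "left_prod n = left_prod (n + 1) / transfer_det n"
    using False by (simp add: left_prod_def)
  then show ?thesis
    using transfer_det_nonzero[of n] by simp
qed

lemma left_prod_interval: "a \<le> b \<Longrightarrow> left_prod b = left_prod a * (\<Prod>j\<in>{a..<b}. transfer_det j)"
proof (induction "nat (b - a)" arbitrary: b)
  case 0
  then show ?case by simp
next
  case (Suc k)
  then have "a < b" and "k = nat (b - 1 - a)"
    by simp_all
  moreover have "{a..<b} = insert (b - 1) {a..<b - 1}"
    using \<open>a < b\<close> by auto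
  ultimately show ?case
    using Suc.hyps(1)[of "b - 1"] left_prod_succ[of "b - 1"] by (simp add: mult_ac)
qed

lemma left_prod_tendsto_at_bot: "(left_prod \<longlongrightarrow> 1) at_bot"
  unfolding tendsto_at_bot_iff_tendsto_uminus_at_top
proof (rule Lim_transform_eventually)
  have "(\<lambda>N. neg_prod / (\<Prod>k<N. transfer_det (- int k - 1))) \<longlonglongrightarrow> neg_prod / neg_prod"
    by (intro tendsto_intros LIMSEQ_prod_transfer_det neg_prod_nonzero)
  then have "(\<lambda>N. neg_prod / (\<Prod>k<N. transfer_det (- int k - 1))) \<longlonglongrightarrow> 1"
    using neg_prod_nonzero by simp
  then show "((\<lambda>m. neg_prod / (\<Prod>k<nat m. transfer_det (- int k - 1))) \<longlongrightarrow> 1) at_top"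
    by (rule filterlim_compose[OF _ filterlim_nat_sequentially])
  show "\<forall>\<^sub>F m in at_top. neg_prod / (\<Prod>k<nat m. transfer_det (- int k - 1)) = left_prod (- m)"
    using eventually_ge_at_top[of "0::int"] by eventually_elim (simp add: left_prod_def)
qed

lemma left_prod_tendsto_at_top_prodinf: "(left_prod \<longlongrightarrow> neg_prod * nonneg_prod) at_top"
proof (rule Lim_transform_eventually)
  show "((\<lambda>n. neg_prod * (\<Prod>k<nat n. transfer_det (int k))) \<longlongrightarrow> neg_prod * nonneg_prod) at_top"
    by (intro tendsto_intros
        filterlim_compose[OF LIMSEQ_prod_transfer_det(2) filterlim_nat_sequentially])
  show "\<forall>\<^sub>F n in at_top. neg_prod * (\<Prod>k<nat n. transfer_det (int k)) = left_prod n"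
    using eventually_ge_at_top[of "0::int"] by eventually_elim (simp add: left_prod_nonneg)
qed

lemma Dinf_eq: "Dinf u v = neg_prod * nonneg_prod"
proof -
  have "{- int N..<int (Suc N)} = {- int N..int N}" for N
    by auto
  then have "(\<Prod>j\<in>{- int N..int N}. 1 - u j * v j) = left_prod (int (Suc N)) / left_prod (- int N)"
    for N
    using left_prod_interval[of "- int N" "int (Suc N)"] left_prod_nonzero[of "- int N"]
    by (simp add: transfer_det_def)
  moreover have "(\<lambda>N. left_prod (int (Suc N))) \<longlonglongrightarrow> neg_prod * nonneg_prod"
    using filterlim_compose[OF left_prod_tendsto_at_top_prodinf filterlim_int_sequentially]
    by (rule LIMSEQ_Suc)
  moreover have "(\<lambda>N. left_prod (- int N)) \<longlonglongrightarrow> 1"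
    using left_prod_tendsto_at_bot unfolding tendsto_at_bot_iff_tendsto_uminus_at_top
    by (rule filterlim_compose[OF _ filterlim_int_sequentially])
  ultimately have "(\<lambda>N. \<Prod>j\<in>{- int N..int N}. 1 - u j * v j) \<longlonglongrightarrow> neg_prod * nonneg_prod / 1"
    by (simp only:) (intro tendsto_divide, simp_all)
  then show ?thesis
    unfolding Dinf_def by (intro limI) simp
qed

lemma Dinf_nonzero: "Dinf u v \<noteq> 0"
  using neg_prod_nonzero nonneg_prod_nonzero by (simp add: Dinf_eq)

lemma left_prod_tendsto_at_top: "(left_prod \<longlongrightarrow> Dinf u v) at_top"
  using left_prod_tendsto_at_top_prodinf by (simp add: Dinf_eq)

text \<open>The reflection \<open>n \<mapsto> -n - 1\<close> reverses the direction of the recursion; the factor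
  \<open>left_prod\<close> absorbs the determinant \<open>1 - u\<^sub>n v\<^sub>n\<close> of the inverted step.\<close>
lemma solves_sys_reflect:
  assumes "z \<noteq> 0" and "solves_sys u v z xi eta"
  shows "solves_sys (reflect u) (reflect v) (1 / z)
    (\<lambda>m. left_prod (- m) * xi (- m)) (\<lambda>m. left_prod (- m) * z^2 * eta (- m))"
proof -
  define X Y where "X m = left_prod (- m) * xi (- m)" and "Y m = left_prod (- m) * z^2 * eta (- m)"
    for m
  have "X m = 1 / z * X (m + 1) + 1 / z * reflect u m * Y (m + 1) \<and>
    Y m = reflect v m * X (m + 1) / (1 / z) + Y (m + 1) / (1 / z)" for m
  proof -
    define n where "n = - m - 1"
    have idx: "- (m + 1) = n" "- m = n + 1" and refl: "reflect u m = - u n" "reflect v m = - v n"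
      unfolding n_def reflect_def by simp_all
    have rec: "xi n = z * xi (n + 1) + z * u n * eta (n + 1)"
      "eta n = v n * xi (n + 1) / z + eta (n + 1) / z"
      using assms(2) unfolding solves_sys_def by blast+
    show ?thesis
      unfolding X_def Y_def idx refl left_prod_succ transfer_det_def rec
      using \<open>z \<noteq> 0\<close> by (simp add: field_simps power2_eq_square)
  qed
  then show ?thesis
    unfolding solves_sys_def X_def Y_def by blast
qed

lemma solves_sys_unreflect:
  assumes "z \<noteq> 0" and "solves_sys (reflect u) (reflect v) (1 / z) X Y"
  shows "solves_sys u v z (\<lambda>n. X (- n) / left_prod n) (\<lambda>n. Y (- n) / (left_prod n * z^2))"
proof -
  define xi eta where "xi n = X (- n) / left_prod n" and "eta n = Y (- n) / (left_prod n * z^2)"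
    for n
  have "xi n = z * xi (n + 1) + z * u n * eta (n + 1) \<and>
      eta n = v n * xi (n + 1) / z + eta (n + 1) / z"
    for n
  proof -
    define m where "m = - n - 1"
    have idx: "- (n + 1) = m" "m + 1 = - n" and refl: "reflect u m = - u n" "reflect v m = - v n"
      unfolding m_def reflect_def by simp_all
    have rec: "X m = 1 / z * X (- n) + 1 / z * (- u n) * Y (- n)"
      "Y m = - v n * X (- n) / (1 / z) + Y (- n) / (1 / z)"
      using assms(2) unfolding solves_sys_def refl[symmetric] idx(2)[symmetric] by blast+
    have L: "left_prod n \<noteq> 0" "left_prod (n + 1) = left_prod n * transfer_det n"
      using left_prod_nonzero left_prod_succ by blast+
    have "transfer_det n * xi (n + 1) = (xi n - u n * z^2 * eta n) / z"
      "transfer_det n * z * eta (n + 1) = z^2 * eta n - v n * xi n"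
      unfolding xi_def eta_def idx rec L(2) using L(1) transfer_det_nonzero[of n] \<open>z \<noteq> 0\<close>
      by (simp_all add: field_simps power2_eq_square)
    from reflected_step_inverse[OF \<open>z \<noteq> 0\<close> transfer_det_def transfer_det_nonzero this]
    show ?thesis ..
  qed
  then show ?thesis
    unfolding solves_sys_def xi_def eta_def by blast
qed

lemma jost_phi_reflect:
  assumes "z \<noteq> 0" and "jost_phi u v z xi eta"
  shows "jost_psibar (reflect u) (reflect v) (1 / z)
    (\<lambda>m. left_prod (- m) * xi (- m)) (\<lambda>m. left_prod (- m) * z^2 * eta (- m))"
proof -
  have sys: "solves_sys u v z xi eta" and xi: "((\<lambda>n. xi n / z powi (- n)) \<longlongrightarrow> 1) at_bot"
    and eta: "(eta \<longlongrightarrow> 0) at_bot"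
    using assms(2) unfolding jost_phi_def by blast+
  have "((\<lambda>n. left_prod n * (xi n / z powi (- n))) \<longlongrightarrow> 1 * 1) at_bot"
    by (intro tendsto_mult left_prod_tendsto_at_bot xi)
  then have "((\<lambda>m. left_prod (- m) * xi (- m) / (1 / z) powi (- m)) \<longlongrightarrow> 1) at_top"
    unfolding tendsto_at_bot_iff_tendsto_uminus_at_top by (simp add: power_int_one_over)
  moreover have "((\<lambda>n. left_prod n * z^2 * eta n) \<longlongrightarrow> 1 * z^2 * 0) at_bot"
    by (intro tendsto_mult tendsto_const left_prod_tendsto_at_bot eta)
  then have "((\<lambda>m. left_prod (- m) * z^2 * eta (- m)) \<longlongrightarrow> 0) at_top"
    unfolding tendsto_at_bot_iff_tendsto_uminus_at_top by simp
  ultimately show ?thesis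
    unfolding jost_psibar_def using solves_sys_reflect[OF assms(1) sys] by blast
qed

lemma jost_psibar_unreflect:
  assumes "z \<noteq> 0" and "jost_psibar (reflect u) (reflect v) (1 / z) X Y"
  shows "jost_phi u v z (\<lambda>n. X (- n) / left_prod n) (\<lambda>n. Y (- n) / (left_prod n * z^2))"
proof -
  have sys: "solves_sys (reflect u) (reflect v) (1 / z) X Y"
    and X: "((\<lambda>m. X m / (1 / z) powi (- m)) \<longlongrightarrow> 1) at_top" and Y: "(Y \<longlongrightarrow> 0) at_top"
    using assms(2) unfolding jost_psibar_def by blast+
  have L: "((\<lambda>m. left_prod (- m)) \<longlongrightarrow> 1) at_top"
    using left_prod_tendsto_at_bot unfolding tendsto_at_bot_iff_tendsto_uminus_at_top .
  have "((\<lambda>m. X m / (1 / z) powi (- m) / left_prod (- m)) \<longlongrightarrow> 1 / 1) at_top"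
    by (intro tendsto_divide X L) simp
  then have "((\<lambda>n. X (- n) / left_prod n / z powi (- n)) \<longlongrightarrow> 1) at_bot"
    unfolding tendsto_at_bot_iff_tendsto_uminus_at_top by (simp add: power_int_one_over mult_ac)
  moreover have "((\<lambda>m. Y m / (left_prod (- m) * z^2)) \<longlongrightarrow> 0 / (1 * z^2)) at_top"
    using \<open>z \<noteq> 0\<close> by (intro tendsto_divide tendsto_mult Y L tendsto_const) simp
  then have "((\<lambda>n. Y (- n) / (left_prod n * z^2)) \<longlongrightarrow> 0) at_bot"
    unfolding tendsto_at_bot_iff_tendsto_uminus_at_top by simp
  ultimately show ?thesis
    unfolding jost_phi_def using solves_sys_unreflect[OF assms(1) sys] by blast
qed

lemma invTr_at_if_invTl_at_reflect:
  assumes "z \<noteq> 0" and "invTl_at (reflect v) (reflect u) z c"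
  shows "invTr_at u v z (c / Dinf u v)"
  unfolding invTr_at_def
proof (intro conjI allI impI)
  have psibar: "invTlbar_at (reflect u) (reflect v) (1 / z) c"
    using assms invTlbar_at_iff_invTl_at[of "1 / z"] by simp
  then show "\<exists>xi eta. jost_phi u v z xi eta"
    using jost_psibar_unreflect[OF assms(1)] unfolding invTlbar_at_def by blast
  fix xi eta assume "jost_phi u v z xi eta"
  then have "((\<lambda>m. left_prod (- m) * xi (- m) / (1 / z) powi (- m)) \<longlongrightarrow> c) at_bot"
    using psibar jost_phi_reflect[OF assms(1)] unfolding invTlbar_at_def by blast
  then have "((\<lambda>n. left_prod n * (xi n / z powi (- n))) \<longlongrightarrow> c) at_top"
    unfolding tendsto_at_top_iff_tendsto_uminus_at_bot by (simp add: power_int_one_over)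
  then have "((\<lambda>n. left_prod n * (xi n / z powi (- n)) / left_prod n) \<longlongrightarrow> c / Dinf u v) at_top"
    using Dinf_nonzero by (intro tendsto_divide left_prod_tendsto_at_top)
  then show "((\<lambda>n. xi n / z powi (- n)) \<longlongrightarrow> c / Dinf u v) at_top"
    using left_prod_nonzero by simp
qed

end

section \<open>Expansions of the four transmission coefficients\<close>

lemma invTl_asymptotics:
  assumes "abs_summable_int u" and "abs_summable_int v"
  shows "\<exists>F. ext_inside (invTl_at u v) F \<and>
    (\<lambda>z. 1 / F z - (1 - z^2 * (\<Sum>\<^sub>\<infinity>k. u (k + 1) * v k))) \<in> O[at 0](\<lambda>z. z^4)"
proof -
  obtain B where "ext_inside (invTl_at u v) B"
    and "(\<lambda>z. B z - (1 + z^2 * (\<Sum>\<^sub>\<infinity>k. u (k + 1) * v k))) \<in> O[at 0](\<lambda>z. z^4)"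
    by (rule invTl_extension[OF assms])
  then show ?thesis
    using inverse_expansion_at_0 by blast
qed

lemma invTr_asymptotics:
  assumes "abs_summable_int u" and "abs_summable_int v" and "\<And>n. 1 - u n * v n \<noteq> 0"
  shows "\<exists>G. ext_inside (invTr_at u v) G \<and>
    (\<lambda>z. 1 / G z - Dinf u v * (1 - z^2 * (\<Sum>\<^sub>\<infinity>k. u (k + 1) * v k))) \<in> O[at 0](\<lambda>z. z^4)"
proof -
  interpret nondegenerate_potentials u v
    using assms by unfold_locales
  let ?S = "\<Sum>\<^sub>\<infinity>k. u (k + 1) * v k"
  obtain B where B: "ext_inside (invTl_at (reflect v) (reflect u)) B"
    and expansion: "(\<lambda>z. B z - (1 + z^2 * ?S)) \<in> O[at 0](\<lambda>z. z^4)"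
    using invTl_extension[OF abs_summable_int_reflect[OF assms(2)]
        abs_summable_int_reflect[OF assms(1)]]
    unfolding infsum_reflect .
  have "ext_inside (invTr_at u v) (\<lambda>z. B z / Dinf u v)"
    using B Dinf_nonzero by (rule ext_inside_divide) (auto intro: invTr_at_if_invTl_at_reflect)
  moreover have "(\<lambda>z. Dinf u v * (1 / B z - (1 - z^2 * ?S))) \<in> O[at 0](\<lambda>z. z^4)"
    using inverse_expansion_at_0[OF expansion] by simp
  then have "(\<lambda>z. 1 / (B z / Dinf u v) - Dinf u v * (1 - z^2 * ?S)) \<in> O[at 0](\<lambda>z. z^4)"
    by (simp add: right_diff_distrib)
  ultimately show ?thesis
    by blast
qed

lemma invTlbar_asymptotics:
  assumes "abs_summable_int u" and "abs_summable_int v"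
  shows "\<exists>F. ext_outside (invTlbar_at u v) F \<and>
    (\<lambda>z. 1 / F z - (1 - (\<Sum>\<^sub>\<infinity>k. u k * v (k + 1)) / z^2)) \<in> O[at_infinity](\<lambda>z. 1 / z^4)"
proof -
  have S: "(\<Sum>\<^sub>\<infinity>k. v (k + 1) * u k) = (\<Sum>\<^sub>\<infinity>k. u k * v (k + 1))"
    by (simp add: mult.commute)
  obtain B where B: "ext_inside (invTl_at v u) B"
    and expansion: "(\<lambda>z. B z - (1 + z^2 * (\<Sum>\<^sub>\<infinity>k. u k * v (k + 1)))) \<in> O[at 0](\<lambda>z. z^4)"
    by (rule invTl_extension[OF assms(2,1), unfolded S])
  have "ext_outside (invTlbar_at u v) (\<lambda>z. B (1 / z))"
    using B by (rule ext_outside_compose_inverse) (subst invTlbar_at_iff_invTl_at; auto)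
  then show ?thesis
    using inverse_expansion_at_infinity[OF expansion] by blast
qed

lemma invTrbar_asymptotics:
  assumes "abs_summable_int u" and "abs_summable_int v" and "\<And>n. 1 - u n * v n \<noteq> 0"
  shows "\<exists>G. ext_outside (invTrbar_at u v) G \<and>
    (\<lambda>z. 1 / G z - Dinf u v * (1 - (\<Sum>\<^sub>\<infinity>k. u k * v (k + 1)) / z^2)) \<in> O[at_infinity](\<lambda>z. 1 / z^4)"
proof -
  have "1 - v n * u n \<noteq> 0" for n
    using assms(3)[of n] by (simp add: mult.commute)
  then interpret nondegenerate_potentials v u
    using assms(1,2) by unfold_locales
  let ?S = "\<Sum>\<^sub>\<infinity>k. u k * v (k + 1)"
  have S: "(\<Sum>\<^sub>\<infinity>k. v (k + 1) * u k) = ?S"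
    by (simp add: mult.commute)
  obtain B where B: "ext_inside (invTl_at (reflect u) (reflect v)) B"
    and expansion: "(\<lambda>z. B z - (1 + z^2 * ?S)) \<in> O[at 0](\<lambda>z. z^4)"
    by (rule invTl_extension[OF abs_summable_int_reflect[OF assms(1)]
          abs_summable_int_reflect[OF assms(2)],
        unfolded infsum_reflect S])
  have D: "Dinf v u = Dinf u v"
    by (rule Dinf_commute)
  have "ext_inside (invTr_at v u) (\<lambda>z. B z / Dinf u v)"
    using B Dinf_nonzero[unfolded D]
    by (rule ext_inside_divide) (auto intro: invTr_at_if_invTl_at_reflect[unfolded D])
  then have "ext_outside (invTrbar_at u v) (\<lambda>z. B (1 / z) / Dinf u v)"
    by (rule ext_outside_compose_inverse) (subst invTrbar_at_iff_invTr_at; auto)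
  moreover have "(\<lambda>z. Dinf u v * (1 / B (1 / z) - (1 - ?S / z^2))) \<in> O[at_infinity](\<lambda>z. 1 / z^4)"
    using inverse_expansion_at_infinity[OF expansion] by simp
  then have "(\<lambda>z. 1 / (B (1 / z) / Dinf u v) - Dinf u v * (1 - ?S / z^2))
      \<in> O[at_infinity](\<lambda>z. 1 / z^4)"
    by (simp add: right_diff_distrib)
  ultimately show ?thesis
    by blast
qed

theorem proposition2p4:
  fixes u v :: "int \<Rightarrow> complex"
  assumes "rapidly_decaying u" and "rapidly_decaying v"
    and "\<And>n. 1 - u n * v n \<noteq> 0"
  defines "S \<equiv> (\<Sum>\<^sub>\<infinity>k::int. u (k+1) * v k)"
    and "Sbar \<equiv> (\<Sum>\<^sub>\<infinity>k::int. u k * v (k+1))"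
    and "D \<equiv> Dinf u v"
  shows "(\<exists>F. ext_inside (invTl_at u v) F \<and>
           (\<lambda>z. 1 / F z - (1 - z^2 * S)) \<in> O[at 0](\<lambda>z. z^4)) \<and>
         (\<exists>G. ext_inside (invTr_at u v) G \<and>
           (\<lambda>z. 1 / G z - D * (1 - z^2 * S)) \<in> O[at 0](\<lambda>z. z^4)) \<and>
         (\<exists>F. ext_outside (invTlbar_at u v) F \<and>
           (\<lambda>z. 1 / F z - (1 - Sbar / z^2)) \<in> O[at_infinity](\<lambda>z. 1 / z^4)) \<and>
         (\<exists>G. ext_outside (invTrbar_at u v) G \<and>
           (\<lambda>z. 1 / G z - D * (1 - Sbar / z^2)) \<in> O[at_infinity](\<lambda>z. 1 / z^4))"
proof -
  have u: "abs_summable_int u" and v: "abs_summable_int v"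
    using rapidly_decaying_imp_abs_summable_int assms(1,2) by blast+
  show ?thesis
    unfolding S_def Sbar_def D_def
    using invTl_asymptotics[OF u v] invTr_asymptotics[OF u v assms(3)]
      invTlbar_asymptotics[OF u v] invTrbar_asymptotics[OF u v assms(3)]
    by blast
qed

end
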